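(* Let $X$ be a Hausdorff Baire space which is developable and $\omega_1$-expandable. Then $dis(X) \geq \Delta(X)$.
   Context: All spaces are Hausdorff. $dis(X)$ denotes the least cardinal $\tau$ such that $X$ is the union of $\tau$ discrete subspaces. $\Delta(X)$ (the dispersion character of $X$) is the least cardinality of a non-empty open subset of $X$. For a collection $\mathcal{G}$ of subsets of $X$ and $x\in X$, $st(x,\mathcal{G})=\bigcup\{G\in\mathcal{G}: x\in G\}$ and $ord(x,\mathcal{G})=|\{G\in\mathcal{G}: x\in G\}|$. A sequence $\{\mathcal{G}_n:n\in\omega\}$ of open covers of $X$ is a development if $\{st(x,\mathcal{G}_n):n\in\omega\}$ is a local base at $x$ for every $x\in X$; $X$ is developable if it admits a development. For a cardinal $\kappa$, $X$ is $\kappa$-expandable if for every closed discrete set $D\subseteq X$ there is a family $\mathcal{G}=\{U_d: d\in D\}$ of open sets with $U_d\cap D=\{d\}$ for each $d\in D$ and $ord(x,\mathcal{G})\leq\kappa$ for every $x\in X$. *)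

theory Defs
  imports "HOL-Analysis.Analysis"
begin

definition Baire_space :: "'a topology \<Rightarrow> bool" where
  "Baire_space X \<longleftrightarrow>
     (\<forall>U :: nat \<Rightarrow> 'a set.
        (\<forall>n. openin X (U n) \<and> X closure_of (U n) = topspace X) \<longrightarrow>
        X closure_of (topspace X \<inter> (\<Inter>n. U n)) = topspace X)"

definition discrete_subspace :: "'a topology \<Rightarrow> 'a set \<Rightarrow> bool" where
  "discrete_subspace X D \<longleftrightarrow>
     D \<subseteq> topspace X \<and> (\<forall>x\<in>D. \<exists>U. openin X U \<and> U \<inter> D = {x})"

definition star :: "'a \<Rightarrow> 'a set set \<Rightarrow> 'a set" where
  "star x G = \<Union>{g \<in> G. x \<in> g}"

definition open_cover :: "'a topology \<Rightarrow> 'a set set \<Rightarrow> bool" where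
  "open_cover X G \<longleftrightarrow> (\<forall>g\<in>G. openin X g) \<and> \<Union>G = topspace X"

definition local_base :: "'a topology \<Rightarrow> 'a \<Rightarrow> 'a set set \<Rightarrow> bool" where
  "local_base X x B \<longleftrightarrow>
     (\<forall>b\<in>B. \<exists>V. openin X V \<and> x \<in> V \<and> V \<subseteq> b \<and> b \<subseteq> topspace X) \<and>
     (\<forall>W. openin X W \<and> x \<in> W \<longrightarrow> (\<exists>b\<in>B. b \<subseteq> W))"

definition development :: "'a topology \<Rightarrow> (nat \<Rightarrow> 'a set set) \<Rightarrow> bool" where
  "development X G \<longleftrightarrow>
     (\<forall>n. open_cover X (G n)) \<and>
     (\<forall>x\<in>topspace X. local_base X x {star x (G n) | n. True})"

definition developable :: "'a topology \<Rightarrow> bool" where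
  "developable X \<longleftrightarrow> (\<exists>G. development X G)"

text \<open>kappa-expandable, for a cardinal kappa given as a well-order relation
  (ord(x,G) \<le> kappa expressed via card_of).  Since U d \<inter> D = {d}, the map
  d \<mapsto> U d is injective, so counting indices d equals counting members of G.\<close>
definition expandable :: "'b rel \<Rightarrow> 'a topology \<Rightarrow> bool" where
  "expandable \<kappa> X \<longleftrightarrow>
     (\<forall>D. closedin X D \<and> discrete_subspace X D \<longrightarrow>
        (\<exists>U :: 'a \<Rightarrow> 'a set.
           (\<forall>d\<in>D. openin X (U d) \<and> U d \<inter> D = {d}) \<and>
           (\<forall>x\<in>topspace X. (card_of {U d | d. d \<in> D \<and> x \<in> U d}, \<kappa>) \<in> ordLeq)))"

abbreviation omega1 :: "nat set rel" where
  "omega1 \<equiv> cardSuc natLeq"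

definition dis_ge_dispersion :: "'a topology \<Rightarrow> bool" where
  "dis_ge_dispersion X \<longleftrightarrow>
     (\<forall>\<D>. (\<forall>D\<in>\<D>. discrete_subspace X D) \<and> \<Union>\<D> = topspace X \<longrightarrow>
        (\<exists>V. openin X V \<and> V \<noteq> {} \<and> (card_of V, card_of \<D>) \<in> ordLeq))"

end

theory Submission
  imports Defs "HOL-Library.Countable_Set_Type"
begin

(* Fix a development G of X and a cover \<D> of X by discrete subspaces.
   Each D \<in> \<D> is split into the sets star_part (G n) D of those d \<in> D whose
   n-th star meets D only in d.  In a T1 space these pieces are closed discrete,
   and they still cover X; they are indexed by \<D> \<times> \<nat>.

   If \<D> is countable, the Baire property yields a piece with non-empty interior;
   being discrete, that piece contains an isolated point p of X, and V = {p} works.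

   If \<D> is uncountable, then omega1 \<le> |\<D>| =: \<kappa>.  Expanding every piece E i by
   open sets U i d of point-order \<le> omega1 \<le> \<kappa>, the sets C m of points d of a
   piece E i with star d (G m) \<subseteq> U i d have closures covering X, so by Baire some
   closure of some C m has non-empty interior W.  Cutting W by one member g of G m
   gives an open V all of whose points are captured, via the expansions, by the
   \<le> \<kappa> points of V \<inter> C m, hence |V| \<le> \<kappa>. *)

unbundle cardinal_syntax

section \<open>Stars and developments\<close>

lemma star_mem:
  assumes "open_cover X G" "x \<in> topspace X"
  shows "x \<in> star x G"
  using assms unfolding open_cover_def star_def by blast

lemma development_star_inside:
  assumes "development X G" "x \<in> topspace X" "openin X W" "x \<in> W"
  shows "\<exists>n. star x (G n) \<subseteq> W"
proof -
  have "local_base X x {star x (G n) |n. True}"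
    using assms(1,2) by (simp add: development_def)
  then show ?thesis
    using assms(3,4) unfolding local_base_def by blast
qed

lemma open_cover_member:
  assumes "open_cover X G" "x \<in> topspace X"
  obtains g where "g \<in> G" "x \<in> g" "openin X g"
  using assms unfolding open_cover_def by blast

section \<open>The Baire property for countable closed covers\<close>

lemma Baire_countable_closed_cover:
  fixes F :: "'i \<Rightarrow> 'a set"
  assumes Baire: "Baire_space X" and ne: "topspace X \<noteq> {}" and I: "countable I"
    and closed: "\<And>i. i \<in> I \<Longrightarrow> closedin X (F i)"
    and cover: "topspace X \<subseteq> (\<Union>i\<in>I. F i)"
  shows "\<exists>i\<in>I. X interior_of F i \<noteq> {}"
proof (rule ccontr)
  assume "\<not> ?thesis"
  then have nowhere_dense: "X interior_of F i = {}" if "i \<in> I" for i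
    using that by blast
  have "I \<noteq> {}" using ne cover by blast
  define U where "U k = topspace X - F (from_nat_into I k)" for k
  have index: "from_nat_into I k \<in> I" for k
    using \<open>I \<noteq> {}\<close> by (rule from_nat_into)
  have "openin X (U k) \<and> X closure_of U k = topspace X" for k
    unfolding U_def closure_of_complement nowhere_dense[OF index]
    using closed[OF index] by auto
  then have dense: "X closure_of (topspace X \<inter> (\<Inter>k. U k)) = topspace X"
    using Baire unfolding Baire_space_def by blast
  have "topspace X \<inter> (\<Inter>k. U k) = {}"
  proof (intro equalityI subsetI)
    fix x assume x: "x \<in> topspace X \<inter> (\<Inter>k. U k)"
    then obtain i where i: "i \<in> I" "x \<in> F i" using cover by blast
    then obtain k where "from_nat_into I k = i" using from_nat_into_surj[OF I] by blast
    then have "x \<in> F (from_nat_into I k)" using i by simp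
    then show "x \<in> {}" using x unfolding U_def by blast
  qed simp
  with dense ne show False by simp
qed

lemma Baire_countable_closed_discrete_cover:
  fixes E :: "'i \<Rightarrow> 'a set"
  assumes "Baire_space X" "topspace X \<noteq> {}" "countable I"
    and closed: "\<And>i. i \<in> I \<Longrightarrow> closedin X (E i)"
    and discrete: "\<And>i. i \<in> I \<Longrightarrow> discrete_subspace X (E i)"
    and "topspace X \<subseteq> (\<Union>i\<in>I. E i)"
  shows "\<exists>p. openin X {p}"
proof -
  obtain i p where i: "i \<in> I" and p: "p \<in> X interior_of E i"
    using Baire_countable_closed_cover[OF assms(1-3) closed assms(6)] by blast
  have "p \<in> E i" using p interior_of_subset by fast
  then obtain W where W: "openin X W" "W \<inter> E i = {p}"
    using discrete[OF i] unfolding discrete_subspace_def by blast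
  have "X interior_of E i \<inter> W = {p}"
    using W(2) p interior_of_subset[of X "E i"] by blast
  then show ?thesis using W(1) by (metis openin_Int openin_interior_of)
qed

section \<open>Splitting a discrete subspace along a development\<close>

definition star_part :: "'a set set \<Rightarrow> 'a set \<Rightarrow> 'a set" where
  "star_part \<G> D = {d\<in>D. star d \<G> \<inter> D = {d}}"

lemma star_part_meets_member:
  assumes "g \<in> \<G>" "d \<in> g" "d \<in> star_part \<G> D"
  shows "g \<inter> star_part \<G> D \<subseteq> {d}"
  using assms unfolding star_part_def star_def by blast

text \<open>Pieces of a discrete subspace are discrete, isolated by members of \<G>.\<close>
lemma star_part_discrete:
  assumes "open_cover X \<G>" "discrete_subspace X D"
  shows "discrete_subspace X (star_part \<G> D)"
  unfolding discrete_subspace_def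
proof (intro conjI ballI)
  show sub: "star_part \<G> D \<subseteq> topspace X"
    using assms(2) unfolding discrete_subspace_def star_part_def by blast
  fix d assume d: "d \<in> star_part \<G> D"
  then obtain g where "g \<in> \<G>" "d \<in> g" "openin X g"
    using open_cover_member[OF assms(1)] sub by blast
  then show "\<exists>U. openin X U \<and> U \<inter> star_part \<G> D = {d}"
    using star_part_meets_member[of g \<G> d D] d by blast
qed

text \<open>In a T1 space the pieces are closed: every point has a neighbourhood in \<G>
  meeting the piece in at most one point, which can be removed.\<close>
lemma star_part_closed:
  assumes "open_cover X \<G>" "t1_space X" "discrete_subspace X D"
  shows "closedin X (star_part \<G> D)"
proof -
  let ?E = "star_part \<G> D"
  have sub: "?E \<subseteq> topspace X"
    using star_part_discrete[OF assms(1,3)] unfolding discrete_subspace_def by blast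
  have "\<exists>T. openin X T \<and> x \<in> T \<and> T \<subseteq> topspace X - ?E" if x: "x \<in> topspace X - ?E" for x
  proof -
    obtain g where g: "g \<in> \<G>" "x \<in> g" "openin X g"
      using open_cover_member[OF assms(1)] x by blast
    show ?thesis
    proof (cases "g \<inter> ?E = {}")
      case True
      then show ?thesis using g openin_subset[OF g(3)] by blast
    next
      case False
      then obtain d where d: "d \<in> g" "d \<in> ?E" by blast
      have "closedin X {d}"
        using assms(2) d(2) sub unfolding t1_space_closedin_singleton by blast
      then have "openin X (g - {d})" using g(3) by (simp add: openin_diff)
      then show ?thesis
        using x d g star_part_meets_member[OF g(1) d(1,2)] openin_subset[OF g(3)] by blast
    qed
  qed
  then show ?thesis using sub closedin_def openin_subopen by blast
qed

lemma star_part_cover: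
  assumes "development X G" "discrete_subspace X D" "x \<in> D"
  shows "\<exists>n. x \<in> star_part (G n) D"
proof -
  have x: "x \<in> topspace X" using assms(2,3) unfolding discrete_subspace_def by blast
  obtain W where W: "openin X W" "W \<inter> D = {x}"
    using assms(2,3) unfolding discrete_subspace_def by blast
  obtain n where "star x (G n) \<subseteq> W"
    using development_star_inside[OF assms(1) x W(1)] W(2) by auto
  moreover have "x \<in> star x (G n)"
    using assms(1) star_mem[OF _ x] by (simp add: development_def)
  ultimately have "star x (G n) \<inter> D = {x}" using W(2) assms(3) by blast
  then show ?thesis using assms(3) unfolding star_part_def by blast
qed

lemma star_parts_cover:
  assumes "development X G" "\<forall>D\<in>\<D>. discrete_subspace X D" "\<Union>\<D> = topspace X"
  shows "topspace X \<subseteq> (\<Union>(D, n)\<in>\<D> \<times> UNIV. star_part (G n) D)"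
proof
  fix x assume "x \<in> topspace X"
  then obtain D where D: "D \<in> \<D>" "x \<in> D" using assms(3) by blast
  then obtain n where "x \<in> star_part (G n) D"
    using star_part_cover[OF assms(1) _ D(2)] assms(2) by blast
  then show "x \<in> (\<Union>(D, n)\<in>\<D> \<times> UNIV. star_part (G n) D)" using D(1) by blast
qed

section \<open>Cardinal arithmetic\<close>

lemma uncountable_omega1_le:
  assumes "uncountable A"
  shows "omega1 \<le>o |A|"
proof -
  have "\<not> |A| \<le>o natLeq" using assms countable_card_le_natLeq by blast
  then have "natLeq <o |A|"
    using not_ordLeq_iff_ordLess[OF natLeq_Well_order card_of_Well_order] by blast
  then show ?thesis
    using cardSuc_ordLess_ordLeq[OF natLeq_Card_order card_of_Card_order] by blast
qed

lemma infinite_times_nat_ordLeq: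
  assumes "infinite A"
  shows "|A \<times> (UNIV :: nat set)| \<le>o |A|"
proof -
  have "|UNIV :: nat set| \<le>o |A|"
    using assms infinite_iff_card_of_nat by blast
  then show ?thesis
    using card_of_Times_infinite_simps(1)[OF assms] ordIso_imp_ordLeq by blast
qed

text \<open>Since U d \<inter> E = {d}, the map d \<mapsto> U d is injective on E, so the points of E
  whose expansion contains x are no more than the members of the expansion
  containing x.\<close>
lemma expansion_point_order:
  assumes "\<And>d. d \<in> E \<Longrightarrow> U d \<inter> E = {d}"
  shows "|{d\<in>E. x \<in> U d}| \<le>o |{U d | d. d \<in> E \<and> x \<in> U d}|"
proof -
  have "inj_on U {d\<in>E. x \<in> U d}"
  proof (rule inj_onI)
    fix d d' assume "d \<in> {d\<in>E. x \<in> U d}" "d' \<in> {d\<in>E. x \<in> U d}" "U d = U d'"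
    then have "{d} = {d'}" using assms by (metis (no_types, lifting) mem_Collect_eq)
    then show "d = d'" by simp
  qed
  moreover have "U ` {d\<in>E. x \<in> U d} \<subseteq> {U d | d. d \<in> E \<and> x \<in> U d}" by blast
  ultimately show ?thesis using card_of_ordLeq by blast
qed

lemma omega1_expansions:
  fixes E :: "'i \<Rightarrow> 'a set" and K :: "'k set"
  assumes exp: "expandable omega1 X" and K: "uncountable K"
    and closed: "\<And>i. i \<in> I \<Longrightarrow> closedin X (E i)"
    and discrete: "\<And>i. i \<in> I \<Longrightarrow> discrete_subspace X (E i)"
  shows "\<exists>U. (\<forall>i\<in>I. \<forall>d\<in>E i. openin X (U i d) \<and> d \<in> U i d) \<and>
    (\<forall>i\<in>I. \<forall>x\<in>topspace X. |{d\<in>E i. x \<in> U i d}| \<le>o |K| )"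
proof -
  let ?expansion = "\<lambda>i U. (\<forall>d\<in>E i. openin X (U d) \<and> U d \<inter> E i = {d}) \<and>
      (\<forall>x\<in>topspace X. |{U d | d. d \<in> E i \<and> x \<in> U d}| \<le>o omega1)"
  have "\<forall>i\<in>I. \<exists>U. ?expansion i U"
  proof
    fix i assume i: "i \<in> I"
    show "\<exists>U. ?expansion i U"
      by (rule exp[unfolded expandable_def, rule_format]) (use closed[OF i] discrete[OF i] in blast)
  qed
  then have "\<exists>U. \<forall>i\<in>I. ?expansion i (U i)" by (rule bchoice)
  then obtain U where "\<forall>i\<in>I. ?expansion i (U i)" ..
  then have U: "?expansion i (U i)" if "i \<in> I" for i using that ..
  show ?thesis
  proof (rule exI[of _ U], rule conjI; intro ballI)
    fix i d assume i: "i \<in> I" and d: "d \<in> E i"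
    then show "openin X (U i d) \<and> d \<in> U i d" using U[OF i] by blast
  next
    fix i x assume i: "i \<in> I" and x: "x \<in> topspace X"
    have injective: "|{d\<in>E i. x \<in> U i d}| \<le>o |{U i d | d. d \<in> E i \<and> x \<in> U i d}|"
      by (rule expansion_point_order) (use U[OF i] in blast)
    have order: "|{U i d | d. d \<in> E i \<and> x \<in> U i d}| \<le>o omega1"
      using U[OF i] x by blast
    show "|{d\<in>E i. x \<in> U i d}| \<le>o |K|"
      by (rule ordLeq_transitive[OF ordLeq_transitive[OF injective order] uncountable_omega1_le[OF K]])
  qed
qed

text \<open>Then every open V contained in the closure of C and in a
  member of \<G> has cardinality at most \<kappa>: V \<inter> C is captured by the expansions
  containing one point x \<in> V, and every point of V by those containing some
  point of V \<inter> C.\<close>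
lemma small_open_in_closure:
  fixes K :: "'k set" and E :: "'i \<Rightarrow> 'a set" and U :: "'i \<Rightarrow> 'a \<Rightarrow> 'a set"
  assumes inf: "infinite K" and I: "|I| \<le>o |K|"
    and cover: "topspace X \<subseteq> (\<Union>i\<in>I. E i)"
    and U: "\<And>i d. i \<in> I \<Longrightarrow> d \<in> E i \<Longrightarrow> openin X (U i d) \<and> d \<in> U i d"
    and order: "\<And>i x. i \<in> I \<Longrightarrow> x \<in> topspace X \<Longrightarrow> |{d\<in>E i. x \<in> U i d}| \<le>o |K|"
    and C: "C = (\<Union>i\<in>I. {d\<in>E i. star d \<G> \<subseteq> U i d})"
    and V: "openin X V" "V \<subseteq> X closure_of C" "V \<subseteq> g" "g \<in> \<G>" "x \<in> V"
  shows "|V| \<le>o |K|"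
proof -
  define N where "N y = (\<Union>i\<in>I. {d\<in>E i. y \<in> U i d})" for y
  have N_small: "|N y| \<le>o |K|" if "y \<in> topspace X" for y
    unfolding N_def by (rule card_of_UNION_ordLeq_infinite[OF inf I]) (use order that in blast)
  have trapped: "V \<inter> C \<subseteq> N x"
  proof
    fix t assume t: "t \<in> V \<inter> C"
    then obtain i where "i \<in> I" "t \<in> E i" "star t \<G> \<subseteq> U i t" unfolding C by blast
    moreover have "x \<in> star t \<G>" using t V(3-5) unfolding star_def by blast
    ultimately show "t \<in> N x" unfolding N_def by blast
  qed
  have captured: "V \<subseteq> (\<Union>t\<in>V \<inter> C. N t)"
  proof
    fix d assume d: "d \<in> V"
    then obtain i where i: "i \<in> I" "d \<in> E i"
      using cover openin_subset[OF V(1)] by blast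
    have "openin X (U i d \<inter> V)" "d \<in> U i d \<inter> V" using U[OF i] V(1) d by auto
    moreover have "d \<in> X closure_of C" using d V(2) by blast
    ultimately obtain t where "t \<in> C" "t \<in> U i d \<inter> V"
      unfolding in_closure_of by blast
    then show "d \<in> (\<Union>t\<in>V \<inter> C. N t)" using i unfolding N_def by blast
  qed
  have x: "x \<in> topspace X" using V(1,5) openin_subset by blast
  have "|V \<inter> C| \<le>o |K|"
    using ordLeq_transitive[OF card_of_mono1[OF trapped] N_small[OF x]] .
  moreover have "\<forall>t\<in>V \<inter> C. |N t| \<le>o |K|"
    using N_small openin_subset[OF V(1)] by blast
  ultimately have "|\<Union>t\<in>V \<inter> C. N t| \<le>o |K|"
    by (rule card_of_UNION_ordLeq_infinite[OF inf])
  then show ?thesis by (rule ordLeq_transitive[OF card_of_mono1[OF captured]])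
qed

lemma Baire_small_open_set:
  fixes K :: "'k set" and E :: "'i \<Rightarrow> 'a set" and U :: "'i \<Rightarrow> 'a \<Rightarrow> 'a set"
  assumes Baire: "Baire_space X" and ne: "topspace X \<noteq> {}" and dev: "development X G"
    and inf: "infinite K" and I: "|I| \<le>o |K|"
    and cover: "topspace X \<subseteq> (\<Union>i\<in>I. E i)"
    and U: "\<And>i d. i \<in> I \<Longrightarrow> d \<in> E i \<Longrightarrow> openin X (U i d) \<and> d \<in> U i d"
    and order: "\<And>i x. i \<in> I \<Longrightarrow> x \<in> topspace X \<Longrightarrow> |{d\<in>E i. x \<in> U i d}| \<le>o |K|"
  shows "\<exists>V. openin X V \<and> V \<noteq> {} \<and> |V| \<le>o |K|"
proof -
  have oc: "open_cover X (G m)" for m using dev by (simp add: development_def)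
  define C where "C m = (\<Union>i\<in>I. {d\<in>E i. star d (G m) \<subseteq> U i d})" for m
  have cover_closures: "topspace X \<subseteq> (\<Union>m\<in>UNIV. X closure_of C m)"
  proof
    fix x assume x: "x \<in> topspace X"
    then obtain i where i: "i \<in> I" "x \<in> E i" using cover by blast
    obtain m where "star x (G m) \<subseteq> U i x"
      using development_star_inside[OF dev x] U[OF i] by blast
    then have "x \<in> C m" using i unfolding C_def by blast
    then have "x \<in> X closure_of C m"
      using x closure_of_subset_Int[of X "C m"] by blast
    then show "x \<in> (\<Union>m\<in>UNIV. X closure_of C m)" by blast
  qed
  have "\<exists>m\<in>UNIV. X interior_of (X closure_of C m) \<noteq> {}"
    by (rule Baire_countable_closed_cover[OF Baire ne _ closedin_closure_of cover_closures]) simp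
  then obtain m x where x: "x \<in> X interior_of (X closure_of C m)" by blast
  then have "x \<in> topspace X" using interior_of_subset_topspace by (rule subsetD[rotated])
  then obtain g where g: "g \<in> G m" "x \<in> g" "openin X g"
    using open_cover_member[OF oc] by blast
  define V where "V = X interior_of (X closure_of C m) \<inter> g"
  have V: "openin X V" "V \<subseteq> X closure_of C m" "x \<in> V"
    using g x interior_of_subset[of X "X closure_of C m"] unfolding V_def by auto
  have "|V| \<le>o |K|"
    by (rule small_open_in_closure[OF inf I cover U order C_def[of m] V(1,2) _ g(1) V(3)])
       (auto simp: V_def)
  then show ?thesis using V by blast
qed

theorem theorem1:
  fixes X :: "'a topology"
  assumes "topspace X \<noteq> {}"
    and "Hausdorff_space X"
    and "Baire_space X"
    and "developable X"
    and "expandable omega1 X"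
  shows "dis_ge_dispersion X"
  unfolding dis_ge_dispersion_def
proof (intro allI impI)
  fix \<D> :: "'a set set"
  assume \<D>: "(\<forall>D\<in>\<D>. discrete_subspace X D) \<and> \<Union>\<D> = topspace X"
  obtain G where dev: "development X G" using assms(4) unfolding developable_def by blast
  have oc: "open_cover X (G n)" for n using dev by (simp add: development_def)
  let ?I = "\<D> \<times> (UNIV :: nat set)"
  define E where "E = (\<lambda>(D, n). star_part (G n) D)"
  have pieces: "closedin X (E i) \<and> discrete_subspace X (E i)" if index: "i \<in> ?I" for i
  proof -
    obtain D n where i: "i = (D, n)" and D: "discrete_subspace X D" using index \<D> by blast
    show ?thesis unfolding i E_def
      using star_part_closed[OF oc Hausdorff_imp_t1_space[OF assms(2)] D]
        star_part_discrete[OF oc D] by simp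
  qed
  have closed: "closedin X (E i)" and discrete: "discrete_subspace X (E i)" if "i \<in> ?I" for i
    using pieces[OF that] by blast+
  have cover: "topspace X \<subseteq> (\<Union>i\<in>?I. E i)"
    using star_parts_cover[OF dev] \<D> unfolding E_def by blast
  show "\<exists>V. openin X V \<and> V \<noteq> {} \<and> |V| \<le>o |\<D>|"
  proof (cases "countable \<D>")
    case True
    then have "countable ?I" by simp
    have "\<exists>p. openin X {p}"
      by (rule Baire_countable_closed_discrete_cover[OF assms(3,1) \<open>countable ?I\<close> closed discrete cover])
    then obtain p where "openin X {p}" ..
    moreover have "\<D> \<noteq> {}" using \<D> assms(1) by blast
    ultimately show ?thesis using card_of_singl_ordLeq[of \<D> p] by blast
  next
    case False
    then have inf: "infinite \<D>" using countable_finite by blast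
    have "\<exists>U. (\<forall>i\<in>?I. \<forall>d\<in>E i. openin X (U i d) \<and> d \<in> U i d) \<and>
        (\<forall>i\<in>?I. \<forall>x\<in>topspace X. |{d\<in>E i. x \<in> U i d}| \<le>o |\<D>| )"
      by (rule omega1_expansions[OF assms(5) False]) (fact closed discrete)+
    then obtain U where U: "\<forall>i\<in>?I. \<forall>d\<in>E i. openin X (U i d) \<and> d \<in> U i d"
      and order: "\<forall>i\<in>?I. \<forall>x\<in>topspace X. |{d\<in>E i. x \<in> U i d}| \<le>o |\<D>|"
      by (elim exE conjE)
    show ?thesis
      by (rule Baire_small_open_set[OF assms(3,1) dev inf infinite_times_nat_ordLeq[OF inf] cover])
        (fact U[rule_format] order[rule_format])+
  qed
qed

end
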